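(* The class of triangle-free graphs is the union of the class of complete bipartite graphs and the class of complements of all graphs $G$ such that $G$ is a connected (claw, bull)-free graph which is neither an expansion of a path of length at least $4$ nor an expansion of a cycle of length at least $6$.
   Context: A claw is a graph isomorphic to $K_{1,3}$. A bull is the graph obtained from a triangle by adding two pendant edges at two different vertices. A graph is (claw, bull)-free if it has no induced subgraph isomorphic to a claw or to a bull. An expansion of a graph $F$ with vertex set $\{v_1,\dots,v_n\}$ is any graph obtained from $F$ by replacing each vertex $v_i$ by a nonempty clique $K^{[i]}$, the cliques being pairwise vertex-disjoint, and adding all edges between $V(K^{[i]})$ and $V(K^{[j]})$ whenever $v_iv_j\in E(F)$ (and no other edges between different cliques). The length of a path is its number of edges. *)

theory Defs
  imports Main
begin

definition sgraph :: "'a set \<Rightarrow> ('a \<Rightarrow> 'a \<Rightarrow> bool) \<Rightarrow> bool" where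
  "sgraph V E \<longleftrightarrow> finite V \<and>
     (\<forall>x y. E x y \<longrightarrow> x \<in> V \<and> y \<in> V \<and> x \<noteq> y) \<and>
     (\<forall>x y. E x y \<longrightarrow> E y x)"

definition complement :: "'a set \<Rightarrow> ('a \<Rightarrow> 'a \<Rightarrow> bool) \<Rightarrow> 'a \<Rightarrow> 'a \<Rightarrow> bool" where
  "complement V E x y \<longleftrightarrow> x \<in> V \<and> y \<in> V \<and> x \<noteq> y \<and> \<not> E x y"

definition triangle_free :: "'a set \<Rightarrow> ('a \<Rightarrow> 'a \<Rightarrow> bool) \<Rightarrow> bool" where
  "triangle_free V E \<longleftrightarrow>
     \<not> (\<exists>a\<in>V. \<exists>b\<in>V. \<exists>c\<in>V. a \<noteq> b \<and> a \<noteq> c \<and> b \<noteq> c \<and> E a b \<and> E b c \<and> E a c)"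

definition complete_bipartite :: "'a set \<Rightarrow> ('a \<Rightarrow> 'a \<Rightarrow> bool) \<Rightarrow> bool" where
  "complete_bipartite V E \<longleftrightarrow> (\<exists>A B. A \<inter> B = {} \<and> A \<union> B = V \<and>
     (\<forall>x\<in>V. \<forall>y\<in>V. E x y \<longleftrightarrow> (x \<in> A \<and> y \<in> B) \<or> (x \<in> B \<and> y \<in> A)))"

definition connected_graph :: "'a set \<Rightarrow> ('a \<Rightarrow> 'a \<Rightarrow> bool) \<Rightarrow> bool" where
  "connected_graph V E \<longleftrightarrow> V \<noteq> {} \<and> (\<forall>x\<in>V. \<forall>y\<in>V. E\<^sup>*\<^sup>* x y)"

definition claw_free :: "'a set \<Rightarrow> ('a \<Rightarrow> 'a \<Rightarrow> bool) \<Rightarrow> bool" where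
  "claw_free V E \<longleftrightarrow> \<not> (\<exists>a\<in>V. \<exists>b\<in>V. \<exists>c\<in>V. \<exists>d\<in>V. distinct [a,b,c,d] \<and>
     E a b \<and> E a c \<and> E a d \<and> \<not> E b c \<and> \<not> E b d \<and> \<not> E c d)"

definition bull_free :: "'a set \<Rightarrow> ('a \<Rightarrow> 'a \<Rightarrow> bool) \<Rightarrow> bool" where
  "bull_free V E \<longleftrightarrow> \<not> (\<exists>a\<in>V. \<exists>b\<in>V. \<exists>c\<in>V. \<exists>d\<in>V. \<exists>e\<in>V. distinct [a,b,c,d,e] \<and>
     E a b \<and> E b c \<and> E a c \<and> E d a \<and> E e b \<and>
     \<not> E d b \<and> \<not> E d c \<and> \<not> E d e \<and> \<not> E e a \<and> \<not> E e c)"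

definition expansion_of ::
  "'a set \<Rightarrow> ('a \<Rightarrow> 'a \<Rightarrow> bool) \<Rightarrow> 'b set \<Rightarrow> ('b \<Rightarrow> 'b \<Rightarrow> bool) \<Rightarrow> bool" where
  "expansion_of V E VF EF \<longleftrightarrow> (\<exists>f. f ` V = VF \<and>
     (\<forall>x\<in>V. \<forall>y\<in>V. x \<noteq> y \<and> f x = f y \<longrightarrow> E x y) \<and>
     (\<forall>x\<in>V. \<forall>y\<in>V. f x \<noteq> f y \<longrightarrow> (E x y \<longleftrightarrow> EF (f x) (f y))))"

text \<open>Path of length k (k edges): vertices 0..k, i ~ i+1.\<close>
definition path_edges :: "nat \<Rightarrow> nat \<Rightarrow> nat \<Rightarrow> bool" where
  "path_edges k i j \<longleftrightarrow> i \<le> k \<and> j \<le> k \<and> (j = i + 1 \<or> i = j + 1)"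

text \<open>Cycle of length k (k \<ge> 3): vertices 0..k-1, i ~ (i+1) mod k.\<close>
definition cycle_edges :: "nat \<Rightarrow> nat \<Rightarrow> nat \<Rightarrow> bool" where
  "cycle_edges k i j \<longleftrightarrow> i < k \<and> j < k \<and> (j = (i + 1) mod k \<or> i = (j + 1) mod k)"

end

(* A graph E is triangle-free exactly when its complement H has no stable set of three
   vertices. Such an H is claw-free and bull-free and is no expansion of a path of length
   at least 4 or of a cycle of length at least 6, all of which contain the stable set of
   the vertices 0, 2, 4; and if H is disconnected, a triangle-free E is complete bipartite
   between a component of H and the rest.

   Conversely, let H be connected, claw-free and bull-free with a stable triple. A shortest
   path between two vertices of the triple, together with the third one, yields an induced
   path of length 4. Along a longest induced path p 0, ..., p L every other vertex sees
   either two or three consecutive path vertices or exactly its two ends, and two such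
   vertices are adjacent iff their positions are equal or adjacent on the cycle obtained by
   closing the path with one extra vertex. So H is an expansion of a path of length L or of
   a cycle of length L + 2. *)

theory Submission
  imports Defs
begin

section \<open>Triangle-free graphs and stable triples of the complement\<close>

definition has_stable_triple :: "'a set \<Rightarrow> ('a \<Rightarrow> 'a \<Rightarrow> bool) \<Rightarrow> bool" where
  "has_stable_triple V G \<longleftrightarrow>
     (\<exists>a\<in>V. \<exists>b\<in>V. \<exists>c\<in>V. a \<noteq> b \<and> a \<noteq> c \<and> b \<noteq> c \<and> \<not> G a b \<and> \<not> G b c \<and> \<not> G a c)"

lemma sgraph_complement: "sgraph V E \<Longrightarrow> sgraph V (complement V E)"
  unfolding sgraph_def complement_def by blast

lemma triangle_free_iff_no_stable_triple_complement:
  "triangle_free V E \<longleftrightarrow> \<not> has_stable_triple V (complement V E)"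
  unfolding triangle_free_def has_stable_triple_def complement_def by blast

lemma claw_free_if_no_stable_triple: "\<not> has_stable_triple V G \<Longrightarrow> claw_free V G"
  unfolding claw_free_def has_stable_triple_def by auto

lemma bull_free_if_no_stable_triple: "\<not> has_stable_triple V G \<Longrightarrow> bull_free V G"
  unfolding bull_free_def has_stable_triple_def by fastforce

lemma has_stable_triple_if_expansion:
  assumes "expansion_of V G VF EF" "a \<in> VF" "b \<in> VF" "c \<in> VF" "a \<noteq> b" "a \<noteq> c" "b \<noteq> c"
    "\<not> EF a b" "\<not> EF b c" "\<not> EF a c"
  shows "has_stable_triple V G"
proof -
  obtain f where f: "f ` V = VF" "\<forall>x\<in>V. \<forall>y\<in>V. f x \<noteq> f y \<longrightarrow> (G x y \<longleftrightarrow> EF (f x) (f y))"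
    using assms(1) unfolding expansion_of_def by blast
  obtain u v w where "u \<in> V" "v \<in> V" "w \<in> V" "f u = a" "f v = b" "f w = c"
    using f(1) assms(2-4) by blast
  then show ?thesis
    using f(2) assms(5-10) unfolding has_stable_triple_def by metis
qed

lemma has_stable_triple_if_path_expansion:
  "expansion_of V G {0..k} (path_edges k) \<Longrightarrow> 4 \<le> k \<Longrightarrow> has_stable_triple V G"
  by (rule has_stable_triple_if_expansion[of _ _ _ _ 0 2 4]) (auto simp: path_edges_def)

lemma has_stable_triple_if_cycle_expansion:
  "expansion_of V G {..<k} (cycle_edges k) \<Longrightarrow> 6 \<le> k \<Longrightarrow> has_stable_triple V G"
  by (rule has_stable_triple_if_expansion[of _ _ _ _ 0 2 4]) (auto simp: cycle_edges_def)

lemma triangle_free_if_complete_bipartite: "complete_bipartite V E \<Longrightarrow> triangle_free V E"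
  unfolding complete_bipartite_def triangle_free_def by blast

lemma complete_bipartite_if_complement_disconnected:
  assumes "sgraph V E" "triangle_free V E" "\<not> connected_graph V (complement V E)"
  shows "complete_bipartite V E"
proof (cases "V = {}")
  case True
  then show ?thesis unfolding complete_bipartite_def by auto
next
  case False
  let ?H = "complement V E"
  obtain x y where xy: "x \<in> V" "y \<in> V" "\<not> ?H\<^sup>*\<^sup>* x y"
    using False assms(3) unfolding connected_graph_def by blast
  define A where "A = {v \<in> V. ?H\<^sup>*\<^sup>* x v}"
  define B where "B = V - A"
  have "x \<in> A" "y \<in> B" using xy unfolding A_def B_def by auto
  have cross: "E u v" "E v u" if "u \<in> A" "v \<in> B" for u v
  proof -
    have "\<not> ?H u v" using that unfolding A_def B_def by (auto intro: rtranclp.rtrancl_into_rtrancl)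
    then show "E u v" using that unfolding A_def B_def complement_def by auto
    then show "E v u" using assms(1) unfolding sgraph_def by blast
  qed
  have no_inner_edge: "\<not> E u v" if "u \<in> V" "v \<in> V" "w \<in> V" "E u w" "E v w" for u v w
    using assms(1,2) that unfolding triangle_free_def sgraph_def by blast
  have "E u v \<longleftrightarrow> (u \<in> A \<and> v \<in> B) \<or> (u \<in> B \<and> v \<in> A)" if "u \<in> V" "v \<in> V" for u v
  proof (cases "u \<in> A"; cases "v \<in> A")
    assume "u \<in> A" "v \<in> A"
    then show ?thesis using no_inner_edge[of u v y] cross[of _ y] \<open>y \<in> B\<close> xy(2) that
      unfolding B_def by blast
  next
    assume "u \<notin> A" "v \<notin> A"
    then show ?thesis using no_inner_edge[of u v x] cross[of x] \<open>x \<in> A\<close> xy(1) that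
      unfolding B_def by blast
  qed (use cross that in \<open>auto simp: B_def\<close>)
  moreover have "A \<inter> B = {}" "A \<union> B = V" unfolding A_def B_def by auto
  ultimately show ?thesis unfolding complete_bipartite_def by blast
qed

section \<open>Walks and induced paths\<close>

lemma relpowp_imp_chain:
  "(R ^^ n) x y \<Longrightarrow> \<exists>w. w 0 = x \<and> w n = y \<and> (\<forall>i<n. R (w i) (w (Suc i)))"
proof (induction n arbitrary: y)
  case 0
  then show ?case by auto
next
  case (Suc n)
  then obtain z where "(R ^^ n) x z" "R z y" by auto
  with Suc.IH obtain w where "w 0 = x" "w n = z" "\<forall>i<n. R (w i) (w (Suc i))" by blast
  then show ?case
    using \<open>R z y\<close> by (intro exI[of _ "w(Suc n := y)"]) (auto simp: less_Suc_eq)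
qed

lemma chain_imp_relpowp:
  assumes "\<forall>i<n. R (w i) (w (Suc i))" "i \<le> j" "j \<le> n"
  shows "(R ^^ (j - i)) (w i) (w j)"
  using assms(2,3)
proof (induction j)
  case 0
  then show ?case by simp
next
  case (Suc j)
  show ?case
  proof (cases "i = Suc j")
    case False
    then have "(R ^^ (j - i)) (w i) (w j)" using Suc by simp
    moreover have "R (w j) (w (Suc j))" using assms(1) Suc.prems by simp
    ultimately show ?thesis using False Suc.prems by (auto simp: Suc_diff_le)
  qed simp
qed

lemma chain_shortcut:
  assumes "\<forall>i<n. R (w i) (w (Suc i))" "i \<le> j" "j \<le> n" "(R ^^ d) (w i) (w j)"
  shows "(R ^^ (i + d + (n - j))) (w 0) (w n)"
proof -
  have "(R ^^ i) (w 0) (w i)" "(R ^^ (n - j)) (w j) (w n)"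
    using chain_imp_relpowp[of n R w 0 i] chain_imp_relpowp[of n R w j n] assms(1-3) by auto
  then show ?thesis using assms(4) by (auto simp: relpowp_add)
qed

lemma rtranclp_crossing:
  assumes "R\<^sup>*\<^sup>* x y" "P x" "\<not> P y"
  obtains u v where "R u v" "P u" "\<not> P v"
  using assms by (induction rule: rtranclp_induct) blast+

locale simple_graph =
  fixes V :: "'a set" and G :: "'a \<Rightarrow> 'a \<Rightarrow> bool"
  assumes sgraph: "sgraph V G"
begin

lemma adj_sym: "G a b \<longleftrightarrow> G b a"
  using sgraph unfolding sgraph_def by blast

lemma adj_in_V: "G a b \<Longrightarrow> a \<in> V" "G a b \<Longrightarrow> b \<in> V"
  using sgraph unfolding sgraph_def by blast+

lemma adj_irrefl [simp]: "\<not> G a a"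
  using sgraph unfolding sgraph_def by blast

definition induced_path :: "(nat \<Rightarrow> 'a) \<Rightarrow> nat \<Rightarrow> bool" where
  "induced_path p n \<longleftrightarrow> (\<forall>i\<le>n. p i \<in> V) \<and> inj_on p {..n} \<and>
     (\<forall>i\<le>n. \<forall>j\<le>n. G (p i) (p j) \<longleftrightarrow> i = Suc j \<or> j = Suc i)"

lemma induced_path_prefix: "induced_path p n \<Longrightarrow> m \<le> n \<Longrightarrow> induced_path p m"
  unfolding induced_path_def inj_on_def by auto

lemma induced_path_length_less_card: "induced_path p n \<Longrightarrow> n < card V"
proof -
  assume p: "induced_path p n"
  have "card (p ` {..n}) = Suc n"
    using p card_image unfolding induced_path_def by fastforce
  moreover have "p ` {..n} \<subseteq> V" using p unfolding induced_path_def by auto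
  moreover have "finite V" using sgraph unfolding sgraph_def by blast
  ultimately show ?thesis by (metis card_mono less_eq_Suc_le)
qed

text \<open>A shortest walk is an induced path: a repeated vertex or a chord would
  yield a shorter walk.\<close>
lemma induced_path_between:
  assumes "x \<in> V" "G\<^sup>*\<^sup>* x y"
  obtains p n where "p 0 = x" "p n = y" "induced_path p n"
proof -
  obtain n where n: "(G ^^ n) x y" and least: "\<And>k. (G ^^ k) x y \<Longrightarrow> n \<le> k"
    using assms(2) ex_has_least_nat[of "\<lambda>k. (G ^^ k) x y" _ id]
    by (auto simp: rtranclp_power)
  obtain w where w: "w 0 = x" "w n = y" and walk: "\<forall>i<n. G (w i) (w (Suc i))"
    using relpowp_imp_chain[OF n] by blast
  note shortcut = chain_shortcut[of n G w, OF walk, unfolded w]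
  have inj: "inj_on w {..n}"
  proof (rule inj_onI, rule ccontr)
    fix i j assume "i \<in> {..n}" "j \<in> {..n}" "w i = w j" "i \<noteq> j"
    then show False
      using shortcut[of i j 0] shortcut[of j i 0] least[of "i + (n - j)"] least[of "j + (n - i)"]
      by (cases "i < j") auto
  qed
  have no_chord: "\<not> G (w i) (w j)" if "i + 2 \<le> j" "j \<le> n" for i j
  proof
    assume "G (w i) (w j)"
    then have "(G ^^ (i + 1 + (n - j))) x y" using shortcut[of i j 1] that by (simp del: relpowp.simps)
    then show False using least that by fastforce
  qed
  have "G (w i) (w j) \<longleftrightarrow> i = Suc j \<or> j = Suc i" if "i \<le> n" "j \<le> n" for i j
  proof
    assume "G (w i) (w j)"
    then show "i = Suc j \<or> j = Suc i"
      using no_chord[of i j] no_chord[of j i] that adj_sym by (cases "i = j") (auto, arith)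
  next
    assume "i = Suc j \<or> j = Suc i"
    then show "G (w i) (w j)" using walk that adj_sym by auto
  qed
  moreover have "w i \<in> V" if "i \<le> n" for i
    using that walk adj_in_V assms(1) w(1) by (cases i) (auto simp: Suc_le_eq)
  ultimately show ?thesis using that[OF w] inj unfolding induced_path_def by blast
qed

lemma attachment_or_pendant:
  assumes "G\<^sup>*\<^sup>* c t" "t \<in> W" "c \<notin> W"
  obtains "\<exists>t\<in>W. G c t"
  | q q' where "q \<notin> W" "\<exists>t\<in>W. G q t" "G q' q" "q' \<notin> W" "\<forall>t\<in>W. \<not> G q' t"
proof (cases "\<exists>t\<in>W. G c t")
  case False
  obtain q' q where q: "G q' q" "q' \<notin> W \<and> (\<forall>t\<in>W. \<not> G q' t)" "\<not> (q \<notin> W \<and> (\<forall>t\<in>W. \<not> G q t))"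
    by (rule rtranclp_crossing[OF assms(1), of "\<lambda>v. v \<notin> W \<and> (\<forall>t\<in>W. \<not> G v t)"])
      (use assms False in auto)
  then have "q \<notin> W" by auto
  then show ?thesis using that(2)[of q q'] q by auto
qed simp

lemma induced_path_reverse:
  assumes "induced_path p n" shows "induced_path (\<lambda>i. p (n - i)) n"
proof -
  have "inj_on (\<lambda>i. p (n - i)) {..n}"
    using assms unfolding induced_path_def inj_on_def by (metis atMost_iff diff_diff_cancel diff_le_self)
  moreover have "G (p (n - i)) (p (n - j)) \<longleftrightarrow> i = Suc j \<or> j = Suc i" if "i \<le> n" "j \<le> n" for i j
  proof -
    have "G (p (n - i)) (p (n - j)) \<longleftrightarrow> n - i = Suc (n - j) \<or> n - j = Suc (n - i)"
      using assms unfolding induced_path_def by simp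
    also have "\<dots> \<longleftrightarrow> i = Suc j \<or> j = Suc i" using that by arith
    finally show ?thesis .
  qed
  ultimately show ?thesis using assms unfolding induced_path_def by simp
qed

lemma induced_path_extend:
  assumes "induced_path p n" "x \<in> V" "\<forall>i\<le>n. x \<noteq> p i" "\<forall>i\<le>n. G (p i) x \<longleftrightarrow> i = n"
  shows "induced_path (p(Suc n := x)) (Suc n)"
proof -
  let ?q = "p(Suc n := x)"
  have "inj_on ?q {..Suc n}"
  proof (rule inj_onI)
    fix i j assume "i \<in> {..Suc n}" "j \<in> {..Suc n}" "?q i = ?q j"
    then show "i = j" using assms(1,3) unfolding induced_path_def inj_on_def
      by (auto simp: le_Suc_eq split: if_splits)
  qed
  moreover have "G (?q i) (?q j) \<longleftrightarrow> i = Suc j \<or> j = Suc i" if "i \<le> Suc n" "j \<le> Suc n" for i j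
  proof -
    have "G x (p i) \<longleftrightarrow> i = n" if "i \<le> n" for i using assms(4) that adj_sym by blast
    then show ?thesis using assms(1,4) that unfolding induced_path_def by (auto simp: le_Suc_eq)
  qed
  moreover have "?q i \<in> V" if "i \<le> Suc n" for i
    using assms(1,2) that unfolding induced_path_def by (auto simp: le_Suc_eq)
  ultimately show ?thesis unfolding induced_path_def by blast
qed

end

section \<open>An induced path of length 4 in claw-free and bull-free graphs\<close>

locale claw_bull_free_graph = simple_graph +
  assumes claw_free: "claw_free V G" and bull_free: "bull_free V G"
begin

lemma no_claw:
  assumes "G a b" "G a c" "G a d" "\<not> G b c" "\<not> G b d" "\<not> G c d" "b \<noteq> c" "b \<noteq> d" "c \<noteq> d"
  shows False
proof -
  have "a \<noteq> b" "a \<noteq> c" "a \<noteq> d" using assms adj_irrefl by metis+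
  moreover have "a \<in> V" "b \<in> V" "c \<in> V" "d \<in> V" using assms adj_in_V by metis+
  ultimately show False using claw_free assms unfolding claw_free_def by auto
qed

lemma no_bull:
  assumes "G a b" "G b c" "G a c" "G d a" "G e b"
    "\<not> G d b" "\<not> G d c" "\<not> G d e" "\<not> G e a" "\<not> G e c"
  shows False
proof -
  have "distinct [a, b, c, d, e]" using assms adj_irrefl adj_sym by auto
  moreover have "a \<in> V" "b \<in> V" "c \<in> V" "d \<in> V" "e \<in> V" using assms adj_in_V by metis+
  ultimately show False using bull_free assms unfolding bull_free_def by blast
qed

lemma induced_path_of_five:
  assumes "distinct [v0, v1, v2, v3, v4]" "G v0 v1" "G v1 v2" "G v2 v3" "G v3 v4"
    "\<not> G v0 v2" "\<not> G v0 v3" "\<not> G v0 v4" "\<not> G v1 v3" "\<not> G v1 v4" "\<not> G v2 v4"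
  shows "induced_path ((!) [v0, v1, v2, v3, v4]) 4"
proof -
  let ?p = "(!) [v0, v1, v2, v3, v4]"
  have upto4: "i = 0 \<or> i = 1 \<or> i = 2 \<or> i = 3 \<or> i = 4" if "i \<le> 4" for i :: nat
    using that by arith
  have "v0 \<in> V" "v1 \<in> V" "v2 \<in> V" "v3 \<in> V" "v4 \<in> V" using assms adj_in_V by metis+
  then have "?p i \<in> V" if "i \<le> 4" for i using upto4[OF that] by auto
  moreover have "inj_on ?p {..4}"
    by (rule inj_onI) (use assms(1) in \<open>auto dest!: upto4\<close>)
  moreover have "G (?p i) (?p j) \<longleftrightarrow> i = Suc j \<or> j = Suc i" if "i \<le> 4" "j \<le> 4" for i j
    using upto4[OF that(1)] upto4[OF that(2)] assms
      adj_sym[of v1 v0] adj_sym[of v2 v0] adj_sym[of v3 v0] adj_sym[of v4 v0] adj_sym[of v2 v1]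
      adj_sym[of v3 v1] adj_sym[of v4 v1] adj_sym[of v3 v2] adj_sym[of v4 v2] adj_sym[of v4 v3]
    by (elim disjE) simp_all
  ultimately show ?thesis unfolding induced_path_def by blast
qed

text \<open>Either c sees m, giving a claw at m, or a path from c enters the path a, m, b
  through some q whose predecessor q' sees none of it; every way for q to attach then yields
  an induced path of length 4, a claw or a bull.\<close>
lemma induced_P5_near_P3:
  assumes "G a m" "G m b" "\<not> G a b" "a \<noteq> b"
    and "G\<^sup>*\<^sup>* c a" "c \<notin> {a, m, b}" "\<not> G c a" "\<not> G c b"
  shows "\<exists>p. induced_path p 4"
proof -
  have ne: "a \<noteq> m" "m \<noteq> b" using assms adj_irrefl by metis+
  show ?thesis
  proof (rule attachment_or_pendant[OF assms(5), of "{a, m, b}"])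
    assume "\<exists>t\<in>{a, m, b}. G c t"
    then show ?thesis using no_claw[of m a b c] assms ne by (auto simp: adj_sym)
  next
    fix q q' assume q: "q \<notin> {a, m, b}" "\<exists>t\<in>{a, m, b}. G q t" "G q' q" "q' \<notin> {a, m, b}"
      "\<forall>t\<in>{a, m, b}. \<not> G q' t"
    have "q' \<noteq> q" using q(3) by auto
    show ?thesis
    proof (cases "G q a"; cases "G q m"; cases "G q b")
    qed (use assms ne q \<open>q' \<noteq> q\<close> induced_path_of_five[of q' q a m b] induced_path_of_five[of q' q b m a]
        no_claw[of q a b q'] no_bull[of q m a q' b] no_bull[of q m b q' a] no_claw[of m a b q]
        in \<open>auto simp: adj_sym\<close>)
  qed (use assms in auto)
qed

lemma induced_P5_near_P4:
  assumes "G a m1" "G m1 m2" "G m2 b" "\<not> G a m2" "\<not> G a b" "\<not> G m1 b" "a \<noteq> b"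
    and "G\<^sup>*\<^sup>* c a" "c \<notin> {a, m1, m2, b}" "\<not> G c a" "\<not> G c b"
  shows "\<exists>p. induced_path p 4"
proof -
  have ne: "a \<noteq> m1" "m1 \<noteq> m2" "m2 \<noteq> b" "a \<noteq> m2" "m1 \<noteq> b" using assms adj_irrefl by metis+
  show ?thesis
  proof (rule attachment_or_pendant[OF assms(8), of "{a, m1, m2, b}"])
    assume "\<exists>t\<in>{a, m1, m2, b}. G c t"
    then show ?thesis
      using no_claw[of m1 a m2 c] no_claw[of m2 m1 b c] no_bull[of m1 m2 c a b] assms ne
      by (auto simp: adj_sym)
  next
    fix q q' assume q: "q \<notin> {a, m1, m2, b}" "\<exists>t\<in>{a, m1, m2, b}. G q t" "G q' q"
      "q' \<notin> {a, m1, m2, b}" "\<forall>t\<in>{a, m1, m2, b}. \<not> G q' t"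
    have "q' \<noteq> q" using q(3) by auto
    show ?thesis
    proof (cases "G q a \<and> G q m2 \<or> G q a \<and> G q b \<or> G q m1 \<and> G q b")
      case True
      then show ?thesis using no_claw[of q a m2 q'] no_claw[of q a b q'] no_claw[of q m1 b q']
          assms ne q \<open>q' \<noteq> q\<close> by (auto simp: adj_sym)
    next
      case False
      show ?thesis
      proof (cases "G q a"; cases "G q m1"; cases "G q m2"; cases "G q b")
      qed (use False assms ne q \<open>q' \<noteq> q\<close> induced_path_of_five[of q' q a m1 m2]
          induced_path_of_five[of q' q b m2 m1] no_claw[of m1 a m2 q] no_claw[of m2 m1 b q]
          no_bull[of q m1 a q' m2] no_bull[of m1 m2 q a b] no_bull[of q m2 b q' m1]
          in \<open>auto simp: adj_sym\<close>)
    qed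
  qed (use assms in auto)
qed

lemma exists_induced_P5:
  assumes conn: "connected_graph V G" and "has_stable_triple V G"
  shows "\<exists>p. induced_path p 4"
proof -
  obtain a b c where abc: "a \<in> V" "b \<in> V" "c \<in> V" "a \<noteq> b" "a \<noteq> c" "b \<noteq> c"
    "\<not> G a b" "\<not> G b c" "\<not> G a c"
    using assms(2) unfolding has_stable_triple_def by blast
  have reach: "G\<^sup>*\<^sup>* x y" if "x \<in> V" "y \<in> V" for x y using conn that unfolding connected_graph_def by blast
  obtain p n where p: "p 0 = a" "p n = b" "induced_path p n"
    using induced_path_between[OF abc(1) reach[OF abc(1,2)]] by blast
  have adj: "G (p i) (p j) \<longleftrightarrow> i = Suc j \<or> j = Suc i" if "i \<le> n" "j \<le> n" for i j
    using p(3) that unfolding induced_path_def by blast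
  have "n \<noteq> 0" using p(1,2) abc(4) by (cases n) auto
  moreover have "n \<noteq> 1" using p abc adj[of 0 1] by auto
  ultimately consider "4 \<le> n" | "n = 2" | "n = 3" by arith
  then show ?thesis
  proof cases
    case 1
    then show ?thesis using induced_path_prefix[OF p(3)] by blast
  next
    case 2
    then have "G a (p 1)" "G (p 1) b" using adj[of 0 1] adj[of 1 2] p by (auto simp: numeral_2_eq_2)
    moreover have "c \<notin> {a, p 1, b}" using calculation abc by auto
    ultimately show ?thesis using induced_P5_near_P3 abc reach adj_sym by metis
  next
    case 3
    then have "G a (p 1)" "G (p 1) (p 2)" "G (p 2) b" "\<not> G a (p 2)" "\<not> G (p 1) b"
      using adj[of 0 1] adj[of 1 2] adj[of 2 3] adj[of 0 2] adj[of 1 3] p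
      by (auto simp: numeral_2_eq_2 numeral_3_eq_3)
    moreover have "c \<notin> {a, p 1, p 2, b}" using calculation abc adj_sym by auto
    ultimately show ?thesis using induced_P5_near_P4 abc reach adj_sym by metis
  qed
qed

lemma exists_longest_induced_path:
  assumes "connected_graph V G" "has_stable_triple V G"
  obtains p L where "induced_path p L" "4 \<le> L" "\<And>q L'. induced_path q L' \<Longrightarrow> L' \<le> L"
proof -
  have "\<exists>q. induced_path q 4" using exists_induced_P5[OF assms] .
  moreover have "\<forall>L'. (\<exists>q. induced_path q L') \<longrightarrow> L' \<le> card V"
    using induced_path_length_less_card by (blast intro: less_imp_le)
  ultimately obtain L where "\<exists>q. induced_path q L" "\<And>L'. (\<exists>q. induced_path q L') \<Longrightarrow> L' \<le> L"
    using Nat.ex_has_greatest_nat[of "\<lambda>L'. \<exists>q. induced_path q L'" 4 "card V"] by blast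
  then show ?thesis using that \<open>\<exists>q. induced_path q 4\<close> by blast
qed

end

section \<open>Vertices around a longest induced path\<close>

locale longest_induced_path = claw_bull_free_graph +
  fixes p :: "nat \<Rightarrow> 'a" and L :: nat
  assumes induced: "induced_path p L" and long: "4 \<le> L"
    and longest: "\<And>q L'. induced_path q L' \<Longrightarrow> L' \<le> L"
begin

lemma path_in_V: "i \<le> L \<Longrightarrow> p i \<in> V"
  using induced unfolding induced_path_def by blast

lemma path_adj [simp]: "i \<le> L \<Longrightarrow> j \<le> L \<Longrightarrow> G (p i) (p j) \<longleftrightarrow> i = Suc j \<or> j = Suc i"
  using induced unfolding induced_path_def by blast

lemma path_eq_iff [simp]: "i \<le> L \<Longrightarrow> j \<le> L \<Longrightarrow> p i = p j \<longleftrightarrow> i = j"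
  using induced unfolding induced_path_def inj_on_def by blast

definition path_nbr :: "'a \<Rightarrow> nat \<Rightarrow> bool" where
  "path_nbr x i \<longleftrightarrow> i \<le> L \<and> G (p i) x"

lemma path_nbr_le: "path_nbr x i \<Longrightarrow> i \<le> L"
  unfolding path_nbr_def by blast

text \<open>Position i \<le> L stands for the path vertex p i and position L + 1 for a vertex seeing
  exactly the two ends of the path; positions are near if they are equal or adjacent on the
  resulting cycle of length L + 2.\<close>
definition near :: "nat \<Rightarrow> nat \<Rightarrow> bool" where
  "near a b \<longleftrightarrow> (a \<le> b + 1 \<and> b \<le> a + 1) \<or> (a = 0 \<and> b = L + 1) \<or> (a = L + 1 \<and> b = 0)"

lemma near_within_path: "i \<le> L \<Longrightarrow> m \<le> L \<Longrightarrow> near i m \<longleftrightarrow> i \<le> m + 1 \<and> m \<le> i + 1"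
  unfolding near_def by auto

lemma near_beyond_path: "i \<le> L \<Longrightarrow> near i (L + 1) \<longleftrightarrow> i = 0 \<or> i = L"
  unfolding near_def by auto

definition has_type :: "'a \<Rightarrow> nat \<Rightarrow> bool" where
  "has_type x m \<longleftrightarrow> m \<le> L + 1 \<and> (\<forall>i\<le>L. G (p i) x \<longleftrightarrow> near i m)"

context
  fixes x assumes x_in_V: "x \<in> V" and off_path: "\<forall>i\<le>L. x \<noteq> p i"
begin

lemma off_path_neq [simp]: "i \<le> L \<Longrightarrow> x \<noteq> p i" "i \<le> L \<Longrightarrow> p i \<noteq> x"
  using off_path by auto

lemma not_only_last_path_nbr:
  assumes "path_nbr x L" shows "\<exists>i<L. path_nbr x i"
proof (rule ccontr)
  assume "\<not> (\<exists>i<L. path_nbr x i)"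
  then have "\<forall>i\<le>L. G (p i) x \<longleftrightarrow> i = L"
    using assms unfolding path_nbr_def by (auto simp: le_less)
  then have "induced_path (p(Suc L := x)) (Suc L)"
    using induced_path_extend induced x_in_V off_path by blast
  then show False using longest by fastforce
qed

lemma not_only_first_path_nbr:
  assumes "path_nbr x 0" shows "\<exists>i>0. path_nbr x i"
proof (rule ccontr)
  let ?r = "\<lambda>i. p (L - i)"
  assume "\<not> (\<exists>i>0. path_nbr x i)"
  then have "G (p j) x \<longleftrightarrow> j = 0" if "j \<le> L" for j
    using assms that unfolding path_nbr_def by (cases "j = 0") auto
  then have "\<forall>i\<le>L. G (?r i) x \<longleftrightarrow> i = L" by auto
  moreover have "\<forall>i\<le>L. x \<noteq> ?r i" by simp
  ultimately have "induced_path (?r(Suc L := x)) (Suc L)"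
    using induced_path_extend induced_path_reverse[OF induced] x_in_V by blast
  then show False using longest by fastforce
qed

lemma path_nbr_interior:
  assumes "0 < i" "i < L" "path_nbr x i" shows "path_nbr x (i - 1) \<or> path_nbr x (i + 1)"
proof (rule ccontr)
  assume "\<not> ?thesis"
  then show False
    by (intro no_claw[of "p i" "p (i - 1)" "p (i + 1)" x]) (use assms in \<open>auto simp: path_nbr_def\<close>)
qed

lemma path_nbr_pair_extends:
  assumes "1 \<le> i" "i + 2 \<le> L" "path_nbr x i" "path_nbr x (i + 1)"
  shows "path_nbr x (i - 1) \<or> path_nbr x (i + 2)"
proof (rule ccontr)
  assume "\<not> ?thesis"
  then show False
    by (intro no_bull[of "p i" "p (i + 1)" x "p (i - 1)" "p (i + 2)"])
      (use assms in \<open>auto simp: path_nbr_def adj_sym[of x]\<close>)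
qed

lemma no_spread_path_nbrs:
  assumes "path_nbr x i" "path_nbr x j" "path_nbr x l" "i + 2 \<le> j" "j + 2 \<le> l"
  shows False
  using no_claw[of x "p i" "p j" "p l"] assms by (auto simp: path_nbr_def adj_sym[of x])

lemma no_four_consecutive_path_nbrs:
  assumes "path_nbr x i" "path_nbr x (i + 1)" "path_nbr x (i + 2)" "path_nbr x (i + 3)"
  shows False
proof (cases i)
  case 0
  then have nbrs: "path_nbr x 0" "path_nbr x 1" "path_nbr x 2" "path_nbr x 3"
    using assms by (simp_all add: numeral_2_eq_2)
  have "path_nbr x 4"
  proof (rule ccontr)
    assume "\<not> path_nbr x 4"
    then show False
      by (intro no_bull[of "p 3" x "p 2" "p 4" "p 0"])
        (use nbrs long in \<open>auto simp: path_nbr_def adj_sym[of x]\<close>)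
  qed
  then show False using no_spread_path_nbrs[of 0 2 4] nbrs by simp
next
  case (Suc k)
  have "path_nbr x k"
  proof (rule ccontr)
    assume "\<not> path_nbr x k"
    then show False
      by (intro no_bull[of "p i" x "p (i + 1)" "p k" "p (i + 3)"])
        (use assms Suc path_nbr_le[OF assms(4)] in \<open>auto simp: path_nbr_def adj_sym[of x]\<close>)
  qed
  then show False using no_spread_path_nbrs[of k "i + 1" "i + 3"] assms Suc by simp
qed

lemma first_pair_excludes_far_path_nbrs:
  assumes "path_nbr x 0" "path_nbr x 1" "\<not> path_nbr x 2" "path_nbr x j" "4 \<le> j"
  shows False
  by (rule no_bull[of "p 1" x "p 0" "p 2" "p j"])
    (use assms path_nbr_le[OF assms(4)] in \<open>auto simp: path_nbr_def adj_sym[of x]\<close>)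

lemma last_pair_excludes_far_path_nbrs:
  assumes "path_nbr x (L - 1)" "path_nbr x L" "\<not> path_nbr x (L - 2)" "path_nbr x j" "j + 4 \<le> L"
  shows False
proof -
  have "L - 1 = Suc (L - 2)" "L = Suc (L - 1)" using long by arith+
  then show False
    by (intro no_bull[of "p (L - 1)" x "p L" "p (L - 2)" "p j"])
      (use assms in \<open>auto simp: path_nbr_def adj_sym[of x]\<close>)
qed

lemma has_type_middle:
  assumes "k + 2 \<le> L" "path_nbr x k" "path_nbr x (k + 1)" "path_nbr x (k + 2)"
  shows "has_type x (k + 1)"
proof -
  have "k \<le> i \<and> i \<le> k + 2" if "path_nbr x i" for i
  proof (rule ccontr)
    assume "\<not> ?thesis"
    then consider "k + 4 \<le> i" | "i + 2 \<le> k" | "i = k + 3" | "i + 1 = k" by arith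
    then show False
    proof cases
      case 1
      then show False using no_spread_path_nbrs[of k "k + 2" i] assms that by auto
    next
      case 2
      then show False using no_spread_path_nbrs[of i k "k + 2"] assms that by auto
    next
      case 3
      then show False using no_four_consecutive_path_nbrs[of k] assms that by auto
    next
      case 4
      then show False using no_four_consecutive_path_nbrs[of i] assms that by (auto simp: eval_nat_numeral)
    qed
  qed
  moreover have "path_nbr x i" if "k \<le> i" "i \<le> k + 2" for i
  proof -
    have "i = k \<or> i = k + 1 \<or> i = k + 2" using that by arith
    then show ?thesis using assms by auto
  qed
  ultimately have "G (p i) x \<longleftrightarrow> k \<le> i \<and> i \<le> k + 2" if "i \<le> L" for i
    using that unfolding path_nbr_def by blast
  then show ?thesis using assms(1) unfolding has_type_def by (auto simp: near_within_path)
qed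

lemma has_type_first:
  assumes "path_nbr x 0" "path_nbr x 1" "\<not> path_nbr x 2"
  shows "has_type x 0"
proof -
  have "i \<le> 1" if "path_nbr x i" for i
  proof (rule ccontr)
    assume "\<not> i \<le> 1"
    then consider "i = 2" | "i = 3" | "4 \<le> i" by arith
    then show False
    proof cases
      case 2
      then have "path_nbr x 4" using path_nbr_interior[of 3] that assms long by auto
      then show False using first_pair_excludes_far_path_nbrs[of 4] assms by simp
    qed (use assms that first_pair_excludes_far_path_nbrs in auto)
  qed
  then show ?thesis
    using assms long unfolding has_type_def near_def path_nbr_def by (auto simp: le_Suc_eq)
qed

lemma has_type_last:
  assumes "path_nbr x (L - 1)" "path_nbr x L" "\<not> path_nbr x (L - 2)"
  shows "has_type x L"
proof -
  have "L - 1 \<le> i" if i_nbr: "path_nbr x i" for i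
  proof (rule ccontr)
    assume "\<not> L - 1 \<le> i"
    then consider "i = L - 2" | "i = L - 3" | "i + 4 \<le> L" using path_nbr_le[OF i_nbr] by arith
    then show False
    proof cases
      case 2
      have "L - 3 - 1 = L - 4" "L - 3 + 1 = L - 2" using long by arith+
      then have "path_nbr x (L - 4)" using path_nbr_interior[of "L - 3"] that assms long 2 by auto
      then show False using last_pair_excludes_far_path_nbrs[of "L - 4"] assms long by simp
    qed (use assms that last_pair_excludes_far_path_nbrs in auto)
  qed
  moreover have "path_nbr x i" if "L - 1 \<le> i" "i \<le> L" for i
  proof -
    have "i = L - 1 \<or> i = L" using that by arith
    then show ?thesis using assms by auto
  qed
  ultimately have "G (p i) x \<longleftrightarrow> L - 1 \<le> i" if "i \<le> L" for i
    using that unfolding path_nbr_def by blast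
  then show ?thesis using long unfolding has_type_def by (auto simp: near_within_path)
qed

lemma has_type_ends:
  assumes "\<exists>i. path_nbr x i" "\<nexists>i. path_nbr x i \<and> path_nbr x (i + 1)"
  shows "has_type x (L + 1)"
proof -
  have ends: "i = 0 \<or> i = L" if i_nbr: "path_nbr x i" for i
  proof (rule ccontr)
    assume "\<not> ?thesis"
    then have "0 < i" "i < L" using path_nbr_le[OF i_nbr] by auto
    moreover have "i - 1 + 1 = i" using \<open>0 < i\<close> by simp
    ultimately show False using path_nbr_interior[OF _ _ i_nbr] assms(2) i_nbr by metis
  qed
  obtain i where i: "path_nbr x i" using assms(1) by blast
  have "path_nbr x 0 \<and> path_nbr x L"
  proof (cases "i = 0")
    case True
    then obtain j where "j > 0" "path_nbr x j" using not_only_first_path_nbr i by blast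
    then show ?thesis using ends[of j] True i by auto
  next
    case False
    then have "i = L" using ends i by blast
    then obtain j where "j < L" "path_nbr x j" using not_only_last_path_nbr i by blast
    then show ?thesis using ends[of j] \<open>i = L\<close> i by auto
  qed
  then have "G (p i) x \<longleftrightarrow> near i (L + 1)" if "i \<le> L" for i
    using ends that near_beyond_path[OF that] unfolding path_nbr_def by blast
  then show ?thesis unfolding has_type_def by simp
qed

lemma has_type_of_consecutive_path_nbrs:
  assumes "path_nbr x i" "path_nbr x (i + 1)"
  shows "\<exists>m. has_type x m"
proof -
  have "i + 1 \<le> L" using path_nbr_le[OF assms(2)] .
  then consider "1 \<le> i" "i + 2 \<le> L" | "i = 0" | "i + 1 = L" by arith
  then show ?thesis
  proof cases
    case 1
    then obtain k where k: "i = Suc k" by (cases i) auto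
    from path_nbr_pair_extends[OF 1 assms] show ?thesis
    proof
      assume "path_nbr x (i - 1)"
      then show ?thesis using has_type_middle[of k] k 1 assms by auto
    next
      assume "path_nbr x (i + 2)"
      then show ?thesis using has_type_middle[of i] 1 assms by (auto simp: add.assoc)
    qed
  next
    case 2
    then show ?thesis
      using has_type_middle[of 0] has_type_first assms long by (cases "path_nbr x 2") (auto simp: numeral_2_eq_2)
  next
    case 3
    have e: "L - 2 + 1 = i" "L - 2 + 2 = L" "L - 1 = i" using 3 long by arith+
    have "path_nbr x L" using assms(2) 3 by simp
    show ?thesis
    proof (cases "path_nbr x (L - 2)")
      case True
      have "has_type x (L - 2 + 1)"
        by (rule has_type_middle) (simp_all only: e True assms \<open>path_nbr x L\<close> order_refl)
      then show ?thesis by blast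
    qed (use has_type_last assms e \<open>path_nbr x L\<close> in auto)
  qed
qed

lemma has_type_if_path_nbr:
  assumes "\<exists>i. path_nbr x i" shows "\<exists>m. has_type x m"
  using has_type_ends[OF assms] has_type_of_consecutive_path_nbrs by blast

end

lemma has_type_adj:
  assumes "has_type x m" "i \<le> L"
  shows "G (p i) x \<longleftrightarrow> near i m" "G x (p i) \<longleftrightarrow> near i m"
  using assms adj_sym unfolding has_type_def by blast+

lemma has_type_le: "has_type x m \<Longrightarrow> m \<le> L + 1"
  unfolding has_type_def by blast

lemma nbr_of_typed_vertex_is_path_nbr:
  assumes "has_type y m" "G y z" "\<forall>i\<le>L. y \<noteq> p i" "\<forall>i\<le>L. z \<noteq> p i"
  shows "\<exists>i. path_nbr z i"
proof (rule ccontr)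
  assume "\<nexists>i. path_nbr z i"
  then have z: "\<not> G (p i) z" "\<not> G z (p i)" if "i \<le> L" for i
    using that adj_sym unfolding path_nbr_def by blast+
  have zne: "z \<noteq> p i" "p i \<noteq> z" "y \<noteq> p i" "p i \<noteq> y" if "i \<le> L" for i
    using assms(3,4) that by auto
  have yz: "G y z" "G z y" using assms(2) adj_sym by blast+
  note ty = has_type_adj[OF assms(1)]
  consider "m = 0" | "0 < m" "m < L" | "m = L" | "m = L + 1"
    using has_type_le[OF assms(1)] by arith
  then show False
  proof cases
    case 1
    show False
      by (rule no_bull[of y "p 1" "p 0" z "p 2"]) (use 1 long yz z zne ty in \<open>auto simp: near_def\<close>)
  next
    case 2
    show False
      by (rule no_claw[of y "p (m - 1)" "p (m + 1)" z]) (use 2 yz z zne ty in \<open>auto simp: near_def\<close>)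
  next
    case 3
    have e: "L - 1 = Suc (L - 2)" "L = Suc (L - 1)" using long by arith+
    show False
      by (rule no_bull[of y "p (L - 1)" "p L" z "p (L - 2)"])
        (use 3 long e yz z zne ty in \<open>auto simp: near_def\<close>)
  next
    case 4
    show False
      by (rule no_claw[of y "p 0" "p L" z]) (use 4 long yz z zne ty in \<open>auto simp: near_def\<close>)
  qed
qed

lemma on_path_or_has_type:
  assumes "connected_graph V G" "v \<in> V"
  shows "(\<exists>i\<le>L. v = p i) \<or> (\<exists>m. has_type v m)"
proof (rule ccontr)
  let ?near_path = "\<lambda>u. (\<exists>i\<le>L. u = p i) \<or> (\<exists>i. path_nbr u i)"
  assume "\<not> ?thesis"
  then have "\<not> ?near_path v" using has_type_if_path_nbr assms(2) by blast
  moreover have "G\<^sup>*\<^sup>* (p 0) v" using assms path_in_V unfolding connected_graph_def by simp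
  ultimately obtain u w where uw: "G u w" "?near_path u" "\<not> ?near_path w"
    using rtranclp_crossing[of G "p 0" v ?near_path] by blast
  show False
  proof (cases "\<exists>i\<le>L. u = p i")
    case True
    then show False using uw unfolding path_nbr_def by blast
  next
    case False
    then obtain m where "has_type u m" using uw(2) has_type_if_path_nbr adj_in_V(1)[OF uw(1)] by blast
    then show False using nbr_of_typed_vertex_is_path_nbr False uw by blast
  qed
qed

context
  fixes x y m m'
  assumes type_x: "has_type x m" and type_y: "has_type y m'" and "x \<noteq> y"
    and x_off_path: "\<forall>i\<le>L. x \<noteq> p i" and y_off_path: "\<forall>i\<le>L. y \<noteq> p i"
begin

lemma typed_pair_neq:
  "i \<le> L \<Longrightarrow> x \<noteq> p i" "i \<le> L \<Longrightarrow> p i \<noteq> x" "i \<le> L \<Longrightarrow> y \<noteq> p i" "i \<le> L \<Longrightarrow> p i \<noteq> y"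
  "x \<noteq> y" "y \<noteq> x"
  using x_off_path y_off_path \<open>x \<noteq> y\<close> by auto

lemmas type_x_adj = has_type_adj[OF type_x] and type_y_adj = has_type_adj[OF type_y]

lemma same_type_adj:
  assumes "m = m'" shows "G x y"
proof (rule ccontr)
  assume "\<not> G x y"
  then have n: "\<not> G x y" "\<not> G y x" using adj_sym by blast+
  note facts = assms n typed_pair_neq type_x_adj type_y_adj long
  consider "m + 2 \<le> L" | "m \<le> L" "L \<le> m + 1" | "m = L + 1" using has_type_le[OF type_x] by arith
  then show False
  proof cases
    case 1
    show False by (rule no_claw[of "p (m + 1)" x y "p (m + 2)"]) (use 1 facts in \<open>auto simp: near_def\<close>)
  next
    case 2
    have e: "m - 1 = Suc (m - 2)" "m = Suc (m - 1)" using 2 long by arith+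
    show False by (rule no_claw[of "p (m - 1)" x y "p (m - 2)"]) (use 2 e facts in \<open>auto simp: near_def\<close>)
  next
    case 3
    show False by (rule no_claw[of "p 0" x y "p 1"]) (use 3 facts in \<open>auto simp: near_def\<close>)
  qed
qed

lemma consecutive_types_adj:
  assumes "m' = m + 1" shows "G x y"
proof (rule ccontr)
  assume "\<not> G x y"
  then have n: "\<not> G x y" "\<not> G y x" using adj_sym by blast+
  note facts = assms n typed_pair_neq type_x_adj type_y_adj long
  consider "2 \<le> m" "m' \<le> L" | "m < 2" | "m = L" using has_type_le[OF type_y] assms long by arith
  then show False
  proof cases
    case 1
    have e: "m - 1 = Suc (m - 2)" "m = Suc (m - 1)" using 1 by arith+
    show False by (rule no_bull[of "p m" "p (m - 1)" x y "p (m - 2)"])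
      (use 1 e facts in \<open>auto simp: near_def\<close>)
  next
    case 2
    show False by (rule no_bull[of "p (m + 1)" "p (m + 2)" y x "p (m + 3)"])
      (use 2 facts in \<open>auto simp: near_def\<close>)
  next
    case 3
    have e: "L - 1 = Suc (L - 2)" "L = Suc (L - 1)" using long by arith+
    show False by (rule no_bull[of "p L" "p (L - 1)" x y "p (L - 2)"])
      (use 3 e facts in \<open>auto simp: near_def\<close>)
  qed
qed

lemma end_types_adj:
  assumes "m = 0" "m' = L + 1" shows "G x y"
proof (rule ccontr)
  assume "\<not> G x y"
  then have n: "\<not> G x y" "\<not> G y x" using adj_sym by blast+
  show False by (rule no_bull[of "p 0" "p 1" x y "p 2"])
    (use assms n typed_pair_neq type_x_adj type_y_adj long in \<open>auto simp: near_def\<close>)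
qed

lemma distant_path_types_nonadj:
  assumes "m + 2 \<le> m'" "m' \<le> L" shows "\<not> G x y"
proof
  assume "G x y"
  then have g: "G x y" "G y x" using adj_sym by blast+
  note facts = assms g typed_pair_neq type_x_adj type_y_adj long
  consider "m' + 2 \<le> L" | "2 \<le> m" | "m' < L" "m + 3 \<le> m'" | "0 < m" "m + 3 \<le> m'"
    | "m = 1" "m' = 3" "L \<le> 4" | "m = 0" "m' = L" using assms long by arith
  then show False
  proof cases
    case 1
    show False by (rule no_bull[of y "p (m' + 1)" "p m'" x "p (m' + 2)"])
      (use 1 facts in \<open>auto simp: near_def\<close>)
  next
    case 2
    have e: "m - 1 = Suc (m - 2)" "m = Suc (m - 1)" using 2 by arith+
    show False by (rule no_bull[of x "p (m - 1)" "p m" y "p (m - 2)"])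
      (use 2 e facts in \<open>auto simp: near_def\<close>)
  next
    case 3
    have e: "m' = Suc (m' - 1)" using 3 by arith
    show False by (rule no_claw[of y x "p (m' - 1)" "p (m' + 1)"])
      (use 3 e facts in \<open>auto simp: near_def\<close>)
  next
    case 4
    have e: "m = Suc (m - 1)" using 4 by arith
    show False by (rule no_claw[of x y "p (m - 1)" "p (m + 1)"])
      (use 4 e facts in \<open>auto simp: near_def\<close>)
  next
    case 5
    show False by (rule no_bull[of x y "p 2" "p 0" "p 4"])
      (use 5 assms g typed_pair_neq type_x_adj[unfolded near_def] type_y_adj[unfolded near_def] long
        in auto)
  next
    case 6
    show False by (rule no_bull[of x "p 1" "p 0" y "p 2"]) (use 6 facts in \<open>auto simp: near_def\<close>)
  qed
qed

lemma inner_and_end_types_nonadj: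
  assumes "0 < m" "m < L" "m' = L + 1" shows "\<not> G x y"
proof
  assume "G x y"
  then have g: "G x y" "G y x" using adj_sym by blast+
  note facts = assms g typed_pair_neq type_x_adj type_y_adj long
  consider "2 \<le> m" "m + 2 \<le> L" | "m = 1" | "m = L - 1" using assms long by arith
  then show False
  proof cases
    case 1
    show False by (rule no_claw[of y x "p 0" "p L"]) (use 1 facts in \<open>auto simp: near_def\<close>)
  next
    case 2
    show False by (rule no_bull[of y x "p 0" "p L" "p 2"]) (use 2 facts in \<open>auto simp: near_def\<close>)
  next
    case 3
    have e: "L - 1 = Suc (L - 2)" "L = Suc (L - 1)" using long by arith+
    show False by (rule no_bull[of y x "p L" "p 0" "p (L - 2)"])
      (use 3 e facts in \<open>auto simp: near_def\<close>)
  qed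
qed

lemma typed_pair_adj_iff_near:
  assumes "m \<le> m'" shows "G x y \<longleftrightarrow> near m m'"
proof (cases "near m m'")
  case True
  then have "m' = m \<or> m' = m + 1 \<or> m = 0 \<and> m' = L + 1" using assms unfolding near_def by auto
  then show ?thesis using True same_type_adj consecutive_types_adj end_types_adj by auto
next
  case False
  then have "m + 2 \<le> m'" "\<not> (m = 0 \<and> m' = L + 1)" using assms unfolding near_def by auto
  moreover have "m' \<le> L + 1" using has_type_le[OF type_y] .
  ultimately consider "m' \<le> L" | "0 < m" "m < L" "m' = L + 1" by (auto simp: le_Suc_eq)
  then show ?thesis
    using False distant_path_types_nonadj inner_and_end_types_nonadj \<open>m + 2 \<le> m'\<close> by cases auto
qed

end

lemma near_sym: "near a b \<longleftrightarrow> near b a"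
  unfolding near_def by auto

lemma near_iff_path_edges: "a \<le> L \<Longrightarrow> b \<le> L \<Longrightarrow> a \<noteq> b \<Longrightarrow> near a b \<longleftrightarrow> path_edges L a b"
  unfolding near_def path_edges_def by auto

lemma near_iff_cycle_edges:
  assumes "a \<le> L + 1" "b \<le> L + 1" "a \<noteq> b"
  shows "near a b \<longleftrightarrow> cycle_edges (L + 2) a b"
proof -
  have "(c + 1) mod (L + 2) = (if c = L + 1 then 0 else c + 1)" if "c \<le> L + 1" for c
    using that by auto
  then show ?thesis using assms unfolding near_def cycle_edges_def by auto
qed

definition position :: "'a \<Rightarrow> nat" where
  "position v = (if v \<in> p ` {..L} then the_inv_into {..L} p v else SOME m. has_type v m)"

lemma position_path [simp]:
  assumes "i \<le> L" shows "position (p i) = i"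
proof -
  have "inj_on p {..L}" using induced unfolding induced_path_def by blast
  then show ?thesis using assms the_inv_into_f_f[of p "{..L}" i] unfolding position_def by simp
qed

lemma path_positions_onto: "{..L} \<subseteq> position ` V"
proof
  fix i assume "i \<in> {..L}"
  then have "i = position (p i)" "p i \<in> V" by (simp_all add: path_in_V)
  then show "i \<in> position ` V" by blast
qed

context
  assumes connected: "connected_graph V G"
begin

lemma position_off_path:
  assumes "v \<in> V" "\<forall>i\<le>L. v \<noteq> p i" shows "has_type v (position v)"
proof -
  have "\<exists>m. has_type v m" using on_path_or_has_type[OF connected assms(1)] assms(2) by blast
  then show ?thesis using assms(2) unfolding position_def by (auto intro: someI_ex)
qed

lemma position_le: "v \<in> V \<Longrightarrow> position v \<le> L + 1"
  using position_off_path has_type_le by (cases "\<exists>i\<le>L. v = p i") auto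

lemma adj_iff_near_position:
  assumes "v \<in> V" "w \<in> V" "v \<noteq> w"
  shows "G v w \<longleftrightarrow> near (position v) (position w)"
proof (cases "\<exists>i\<le>L. v = p i"; cases "\<exists>i\<le>L. w = p i")
  assume "\<exists>i\<le>L. v = p i" "\<exists>i\<le>L. w = p i"
  then show ?thesis using assms(3) by (auto simp: near_def)
next
  assume "\<exists>i\<le>L. v = p i" "\<not> (\<exists>i\<le>L. w = p i)"
  then show ?thesis using position_off_path[OF assms(2)] has_type_adj by auto
next
  assume "\<not> (\<exists>i\<le>L. v = p i)" "\<exists>i\<le>L. w = p i"
  then show ?thesis using position_off_path[OF assms(1)] has_type_adj near_sym by auto
next
  assume off: "\<not> (\<exists>i\<le>L. v = p i)" "\<not> (\<exists>i\<le>L. w = p i)"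
  then have types: "has_type v (position v)" "has_type w (position w)"
    using position_off_path assms by blast+
  show ?thesis
  proof (cases "position v \<le> position w")
    case True
    then show ?thesis using typed_pair_adj_iff_near[OF types] off assms(3) by blast
  next
    case False
    then show ?thesis
      using typed_pair_adj_iff_near[OF types(2,1)] off assms(3) adj_sym near_sym by auto
  qed
qed

lemma adj_if_same_position: "v \<in> V \<Longrightarrow> w \<in> V \<Longrightarrow> v \<noteq> w \<Longrightarrow> position v = position w \<Longrightarrow> G v w"
  using adj_iff_near_position by (simp add: near_def)

lemma expansion_of_path_if_positions_on_path:
  assumes "\<forall>v\<in>V. position v \<le> L"
  shows "expansion_of V G {0..L} (path_edges L)"
proof -
  have "position ` V = {0..L}" using path_positions_onto assms by (auto simp: atLeast0AtMost)
  moreover have "G v w \<longleftrightarrow> path_edges L (position v) (position w)"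
    if "v \<in> V" "w \<in> V" "position v \<noteq> position w" for v w
    using that adj_iff_near_position[of v w] near_iff_path_edges assms by auto
  ultimately show ?thesis
    unfolding expansion_of_def using adj_if_same_position by (intro exI[of _ position]) blast
qed

lemma expansion_of_cycle_if_position_off_path:
  assumes "\<exists>v\<in>V. position v = L + 1"
  shows "expansion_of V G {..<L + 2} (cycle_edges (L + 2))"
proof -
  have "insert (L + 1) {..L} \<subseteq> position ` V"
    using path_positions_onto assms by (metis image_eqI insert_subset)
  moreover have "{..<L + 2} = insert (L + 1) {..L}" by auto
  moreover have "position ` V \<subseteq> {..<L + 2}"
    unfolding image_subset_iff using position_le by (simp add: less_Suc_eq_le)
  ultimately have "position ` V = {..<L + 2}" by blast
  moreover have "G v w \<longleftrightarrow> cycle_edges (L + 2) (position v) (position w)"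
    if "v \<in> V" "w \<in> V" "position v \<noteq> position w" for v w
    using that adj_iff_near_position[of v w] near_iff_cycle_edges[OF position_le position_le] by auto
  ultimately show ?thesis
    unfolding expansion_of_def using adj_if_same_position by (intro exI[of _ position]) blast
qed

lemma expansion_of_path_or_cycle:
  "(\<exists>k\<ge>4. expansion_of V G {0..k} (path_edges k)) \<or>
   (\<exists>k\<ge>6. expansion_of V G {..<k} (cycle_edges k))"
proof (cases "\<exists>v\<in>V. position v = L + 1")
  case True
  then show ?thesis
    using expansion_of_cycle_if_position_off_path long by (intro disjI2 exI[of _ "L + 2"]) auto
next
  case False
  then have "\<forall>v\<in>V. position v \<le> L" using position_le by (auto simp: le_Suc_eq)
  then show ?thesis using expansion_of_path_if_positions_on_path long by blast
qed

end

end

theorem (in claw_bull_free_graph) expansion_of_path_or_cycle_if_stable_triple: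
  assumes "connected_graph V G" "has_stable_triple V G"
  shows "(\<exists>k\<ge>4. expansion_of V G {0..k} (path_edges k)) \<or>
         (\<exists>k\<ge>6. expansion_of V G {..<k} (cycle_edges k))"
proof -
  obtain p L where "induced_path p L" "4 \<le> L" "\<And>q L'. induced_path q L' \<Longrightarrow> L' \<le> L"
    using exists_longest_induced_path[OF assms] by blast
  then interpret longest_induced_path V G p L by unfold_locales
  show ?thesis using expansion_of_path_or_cycle[OF assms(1)] .
qed

theorem corollary1:
  fixes V :: "'a set" and E :: "'a \<Rightarrow> 'a \<Rightarrow> bool"
  assumes "sgraph V E"
  shows "triangle_free V E \<longleftrightarrow>
           complete_bipartite V E \<or>
           (connected_graph V (complement V E) \<and>
            claw_free V (complement V E) \<and>
            bull_free V (complement V E) \<and>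
            \<not> (\<exists>k\<ge>4. expansion_of V (complement V E) {0..k} (path_edges k)) \<and>
            \<not> (\<exists>k\<ge>6. expansion_of V (complement V E) {..<k} (cycle_edges k)))"
proof -
  let ?H = "complement V E"
  show ?thesis (is "_ \<longleftrightarrow> _ \<or> ?structure")
  proof
    assume "triangle_free V E"
    then have "\<not> has_stable_triple V ?H"
      using triangle_free_iff_no_stable_triple_complement by blast
    then show "complete_bipartite V E \<or> ?structure"
      using complete_bipartite_if_complement_disconnected[OF assms \<open>triangle_free V E\<close>]
        claw_free_if_no_stable_triple bull_free_if_no_stable_triple
        has_stable_triple_if_path_expansion has_stable_triple_if_cycle_expansion
      by blast
  next
    assume "complete_bipartite V E \<or> ?structure"
    then show "triangle_free V E"
    proof
      assume ?structure
      then interpret claw_bull_free_graph V ?H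
        using sgraph_complement[OF assms] by unfold_locales blast+
      show "triangle_free V E"
        using expansion_of_path_or_cycle_if_stable_triple triangle_free_iff_no_stable_triple_complement
          \<open>?structure\<close> by blast
    qed (rule triangle_free_if_complete_bipartite)
  qed
qed

end
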